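(* Let $\mathcal M$ be a finite polyptych lattice over $F$ and let $\mathcal C$ be a maximal-dimensional cone of $\Sigma(\mathcal M)$. If $p,q\in\mathrm{Sp}(\mathcal M)$ satisfy $p(m)=q(m)$ for all $m\in\mathcal C\cap\mathcal M$, then $p=q$. Likewise, if $p,q\in\mathrm{Sp}_{\mathbb R}(\mathcal M)$ agree on $\mathcal C$, then $p=q$.
   Context: Fix a subring $F$ with $\mathbb Z\subseteq F\subseteq\mathbb R$. A map $\psi:M\to M'$ between finite-rank free $F$-modules is piecewise $F$-linear if it is continuous and there is a complete fan of $F$-rational polyhedral cones in $M\otimes_F\mathbb R$ with $\psi$ $F$-linear on each cone. A polyptych lattice of rank $r$ over $F$ is a collection $\{M_\alpha\}_{\alpha\in I}$ of free $F$-modules of rank $r$ with piecewise $F$-linear maps $\mu_{\alpha,\beta}:M_\alpha\to M_\beta$ for all $\alpha,\beta$ with $\mu_{\alpha,\alpha}=\mathrm{id}$, $\mu_{\alpha,\beta}=\mu_{\beta,\alpha}^{-1}$, $\mu_{\beta,\gamma}\circ\mu_{\alpha,\beta}=\mu_{\alpha,\gamma}$; finite if $I$ is finite. Its elements are classes of $\bigsqcup M_\alpha$ under $m_\alpha\sim\mu_{\alpha,\beta}(m_\alpha)$; $\pi_\alpha$ is the chart map to $M_\alpha$; $\mathcal M_{\mathbb R}$ is obtained by tensoring charts with $\mathbb R$. $m+_\alpha m':=\pi_\alpha^{-1}(\pi_\alpha(m)+\pi_\alpha(m'))$, $\lambda m:=\pi_\alpha^{-1}(\lambda\pi_\alpha(m))$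 for $\lambda\ge0$. $\Sigma(\mathcal M)$ is the coarsest complete fan of cones in $\mathcal M_{\mathbb R}$ (sets whose chart images are $F$-rational polyhedral cones) on whose chart images all mutations are linear. A point is $p:\mathcal M\to F$ with $p(m)+p(m')=\min_{\alpha}p(m+_\alpha m')$ and $p(\lambda m)=\lambda p(m)$ ($\lambda\in F_{\ge0}$); $\mathrm{Sp}(\mathcal M)$ is the set of points and $\mathrm{Sp}_{\mathbb R}(\mathcal M)$ the set of points of $\mathcal M_{\mathbb R}$. *)

theory Defs
  imports "HOL-Analysis.Analysis"
begin

text \<open>A free F-module of rank r is modelled as the set of vectors in
  real^'n (r = CARD('n)) with all coordinates in F; its tensor product with the reals is
  all of real^'n. A mutation is given by its (unique, continuous, piecewise linear)
  extension to real^'n.\<close>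

definition subring_Z :: "real set \<Rightarrow> bool" where
  "subring_Z F \<longleftrightarrow> \<int> \<subseteq> F \<and> (\<forall>x\<in>F. \<forall>y\<in>F. x + y \<in> F \<and> x * y \<in> F \<and> - x \<in> F)"

definition Fpts :: "real set \<Rightarrow> (real^'n) set" where
  "Fpts S = {v. \<forall>i. v $ i \<in> S}"

definition gen_cone :: "(real^'n) set \<Rightarrow> (real^'n) set" where
  "gen_cone V = {x. \<exists>c. (\<forall>v\<in>V. c v \<ge> 0) \<and> x = (\<Sum>v\<in>V. c v *\<^sub>R v)}"

definition F_cone :: "real set \<Rightarrow> (real^'n) set \<Rightarrow> bool" where
  "F_cone F \<sigma> \<longleftrightarrow> (\<exists>V. finite V \<and> V \<subseteq> Fpts F \<and> \<sigma> = gen_cone V)"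

definition F_fan :: "real set \<Rightarrow> (real^'n) set set \<Rightarrow> bool" where
  "F_fan F \<Sigma> \<longleftrightarrow> finite \<Sigma> \<and> (\<forall>\<sigma>\<in>\<Sigma>. F_cone F \<sigma>)
     \<and> (\<forall>\<sigma>\<in>\<Sigma>. \<forall>\<tau>. \<tau> face_of \<sigma> \<and> \<tau> \<noteq> {} \<longrightarrow> \<tau> \<in> \<Sigma>)
     \<and> (\<forall>\<sigma>\<in>\<Sigma>. \<forall>\<tau>\<in>\<Sigma>. (\<sigma> \<inter> \<tau>) face_of \<sigma> \<and> (\<sigma> \<inter> \<tau>) face_of \<tau>)"

definition complete_F_fan :: "real set \<Rightarrow> (real^'n) set set \<Rightarrow> bool" where
  "complete_F_fan F \<Sigma> \<longleftrightarrow> F_fan F \<Sigma> \<and> \<Union>\<Sigma> = UNIV"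

definition pw_F_linear :: "real set \<Rightarrow> (real^'n \<Rightarrow> real^'n) \<Rightarrow> bool" where
  "pw_F_linear F f \<longleftrightarrow> continuous_on UNIV f \<and>
     (\<exists>\<Sigma>. complete_F_fan F \<Sigma> \<and>
        (\<forall>\<sigma>\<in>\<Sigma>. \<exists>A::real^'n^'n. (\<forall>i j. A $ i $ j \<in> F) \<and> (\<forall>x\<in>\<sigma>. f x = A *v x)))"

definition polyptych_lattice ::
  "real set \<Rightarrow> 'i set \<Rightarrow> ('i \<Rightarrow> 'i \<Rightarrow> real^'n \<Rightarrow> real^'n) \<Rightarrow> bool" where
  "polyptych_lattice F I \<mu> \<longleftrightarrow> subring_Z F \<and>
     (\<forall>a\<in>I. \<forall>b\<in>I. \<mu> a b ` Fpts F \<subseteq> Fpts F \<and> pw_F_linear F (\<mu> a b)) \<and>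
     (\<forall>a\<in>I. \<forall>v. \<mu> a a v = v) \<and>
     (\<forall>a\<in>I. \<forall>b\<in>I. \<forall>v. \<mu> b a (\<mu> a b v) = v) \<and>
     (\<forall>a\<in>I. \<forall>b\<in>I. \<forall>c\<in>I. \<forall>v. \<mu> b c (\<mu> a b v) = \<mu> a c v)"

text \<open>Elements: the equivalence class of (a, v) is the set of all its chart representatives.
  With S = F this gives the polyptych lattice M, with S = UNIV it gives M_R; M is then
  literally a subset of M_R.\<close>
definition pl_class :: "'i set \<Rightarrow> ('i \<Rightarrow> 'i \<Rightarrow> real^'n \<Rightarrow> real^'n) \<Rightarrow> 'i \<Rightarrow> real^'n
    \<Rightarrow> ('i \<times> (real^'n)) set" where
  "pl_class I \<mu> a v = {(b, \<mu> a b v) | b. b \<in> I}"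

definition pl_elems :: "real set \<Rightarrow> 'i set \<Rightarrow> ('i \<Rightarrow> 'i \<Rightarrow> real^'n \<Rightarrow> real^'n)
    \<Rightarrow> ('i \<times> (real^'n)) set set" where
  "pl_elems S I \<mu> = {pl_class I \<mu> a v | a v. a \<in> I \<and> v \<in> Fpts S}"

definition pl_chart :: "'i \<Rightarrow> ('i \<times> (real^'n)) set \<Rightarrow> real^'n" where
  "pl_chart a m = (THE v. (a, v) \<in> m)"

definition pl_add :: "'i set \<Rightarrow> ('i \<Rightarrow> 'i \<Rightarrow> real^'n \<Rightarrow> real^'n) \<Rightarrow> 'i
    \<Rightarrow> ('i \<times> (real^'n)) set \<Rightarrow> ('i \<times> (real^'n)) set \<Rightarrow> ('i \<times> (real^'n)) set" where
  "pl_add I \<mu> a m m' = pl_class I \<mu> a (pl_chart a m + pl_chart a m')"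

definition pl_smul :: "'i set \<Rightarrow> ('i \<Rightarrow> 'i \<Rightarrow> real^'n \<Rightarrow> real^'n) \<Rightarrow> 'i
    \<Rightarrow> real \<Rightarrow> ('i \<times> (real^'n)) set \<Rightarrow> ('i \<times> (real^'n)) set" where
  "pl_smul I \<mu> a c m = pl_class I \<mu> a (c *\<^sub>R pl_chart a m)"

text \<open>Points of the polyptych lattice with scalars S (S = F: Sp(M); S = UNIV: Sp_R(M)).\<close>
definition pl_point :: "real set \<Rightarrow> 'i set \<Rightarrow> ('i \<Rightarrow> 'i \<Rightarrow> real^'n \<Rightarrow> real^'n)
    \<Rightarrow> (('i \<times> (real^'n)) set \<Rightarrow> real) \<Rightarrow> bool" where
  "pl_point S I \<mu> p \<longleftrightarrow>
     (\<forall>m\<in>pl_elems S I \<mu>. p m \<in> S) \<and>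
     (\<forall>m\<in>pl_elems S I \<mu>. \<forall>m'\<in>pl_elems S I \<mu>.
        p m + p m' = Min ((\<lambda>a. p (pl_add I \<mu> a m m')) ` I)) \<and>
     (\<forall>c\<in>S. c \<ge> 0 \<longrightarrow> (\<forall>m\<in>pl_elems S I \<mu>. \<forall>a\<in>I. p (pl_smul I \<mu> a c m) = c * p m))"

definition pl_cone :: "real set \<Rightarrow> 'i set \<Rightarrow> ('i \<Rightarrow> 'i \<Rightarrow> real^'n \<Rightarrow> real^'n)
    \<Rightarrow> ('i \<times> (real^'n)) set set \<Rightarrow> bool" where
  "pl_cone F I \<mu> C \<longleftrightarrow> C \<subseteq> pl_elems UNIV I \<mu> \<and> (\<forall>a\<in>I. F_cone F (pl_chart a ` C))"

definition pl_linear_fan :: "real set \<Rightarrow> 'i set \<Rightarrow> ('i \<Rightarrow> 'i \<Rightarrow> real^'n \<Rightarrow> real^'n)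
    \<Rightarrow> ('i \<times> (real^'n)) set set set \<Rightarrow> bool" where
  "pl_linear_fan F I \<mu> \<Sigma> \<longleftrightarrow>
     (\<forall>C\<in>\<Sigma>. pl_cone F I \<mu> C) \<and>
     (\<forall>a\<in>I. complete_F_fan F ((\<lambda>C. pl_chart a ` C) ` \<Sigma>)) \<and>
     (\<forall>C\<in>\<Sigma>. \<forall>a\<in>I. \<forall>b\<in>I. \<exists>L. linear L \<and> (\<forall>v\<in>pl_chart a ` C. \<mu> a b v = L v))"

definition pl_Sigma :: "real set \<Rightarrow> 'i set \<Rightarrow> ('i \<Rightarrow> 'i \<Rightarrow> real^'n \<Rightarrow> real^'n)
    \<Rightarrow> ('i \<times> (real^'n)) set set set \<Rightarrow> bool" where
  "pl_Sigma F I \<mu> \<Sigma> \<longleftrightarrow> pl_linear_fan F I \<mu> \<Sigma> \<and>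
     (\<forall>\<Sigma>'. pl_linear_fan F I \<mu> \<Sigma>' \<longrightarrow> (\<forall>C'\<in>\<Sigma>'. \<exists>C\<in>\<Sigma>. C' \<subseteq> C))"

end

theory Submission
  imports Defs
begin

text \<open>Let K be the image of C in a chart a. Since K is full-dimensional, every mutation
  \<open>\<mu> a b\<close>, being linear and injective on K, agrees on K with a linear automorphism \<open>L\<^sub>b\<close>.
  Given any m, choose \<open>w\<^sub>b\<close> with \<open>L\<^sub>b w\<^sub>b = \<pi>\<^sub>b m\<close>; as I is finite, a single element u of C,
  deep enough inside the cone, makes every \<open>m +\<^sub>b u\<close> lie in C as well. Then
  \<open>p m + p u = min\<^sub>b p (m +\<^sub>b u) = min\<^sub>b q (m +\<^sub>b u) = q m + q u\<close> and \<open>p u = q u\<close> give \<open>p m = q m\<close>.\<close>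

lemma gen_cone_translate_eventually:
  fixes V :: "(real^'n) set"
  assumes fin: "finite V" and w: "w \<in> span V"
  shows "eventually (\<lambda>N. w + real N *\<^sub>R (\<Sum>V) \<in> gen_cone V) sequentially"
proof -
  obtain c where wc: "w = (\<Sum>v\<in>V. c v *\<^sub>R v)"
    using w span_finite[OF fin] by auto
  define N0 where "N0 = nat \<lceil>\<Sum>v\<in>V. \<bar>c v\<bar>\<rceil>"
  show ?thesis unfolding eventually_sequentially
  proof (intro exI allI impI)
    fix N assume N: "N \<ge> N0"
    have nonneg: "c v + real N \<ge> 0" if "v \<in> V" for v
    proof -
      have "\<bar>c v\<bar> \<le> (\<Sum>v\<in>V. \<bar>c v\<bar>)"
        using member_le_sum[of v V "\<lambda>v. \<bar>c v\<bar>"] fin that by auto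
      also have "\<dots> \<le> real N0" unfolding N0_def by linarith
      also have "\<dots> \<le> real N" using N by simp
      finally show ?thesis by linarith
    qed
    have "w + real N *\<^sub>R (\<Sum>V) = (\<Sum>v\<in>V. (c v + real N) *\<^sub>R v)"
      by (simp add: wc scaleR_add_left sum.distrib scaleR_sum_right)
    then show "w + real N *\<^sub>R (\<Sum>V) \<in> gen_cone V"
      unfolding gen_cone_def using nonneg by (intro CollectI exI[of _ "\<lambda>v. c v + real N"]) simp
  qed
qed

lemma gen_cone_absorbs_finite:
  fixes V W :: "(real^'n) set"
  assumes "finite V" and "span V = UNIV" and "finite W"
  shows "\<exists>N::nat. \<forall>w\<in>W. w + real N *\<^sub>R (\<Sum>V) \<in> gen_cone V"
proof -
  have "eventually (\<lambda>N. \<forall>w\<in>W. w + real N *\<^sub>R (\<Sum>V) \<in> gen_cone V) sequentially"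
    using assms by (intro eventually_ball_finite ballI gen_cone_translate_eventually) auto
  then show ?thesis unfolding eventually_sequentially by blast
qed

lemma span_eq_UNIV_if_full_aff_dim_gen_cone:
  fixes V :: "(real^'n) set"
  assumes "aff_dim (gen_cone V) = int CARD('n)"
  shows "span V = UNIV"
proof -
  have "gen_cone V \<subseteq> span V"
    unfolding gen_cone_def by (auto intro!: span_sum span_scale intro: span_base)
  then have "aff_dim (gen_cone V) \<le> aff_dim (span V)" by (rule aff_dim_subset)
  also have "\<dots> = int (dim V)" by (simp add: aff_dim_subspace)
  finally have "dim V \<ge> CARD('n)" using assms by simp
  moreover have "dim V \<le> CARD('n)" using dim_subset_UNIV[of V] by simp
  ultimately have "dim V = DIM(real^'n)" by simp
  then show ?thesis using dim_eq_full by blast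
qed

lemma linear_surj_if_agrees_with_inj:
  fixes L f :: "'a::euclidean_space \<Rightarrow> 'a"
  assumes L: "linear L" and "inj f" and fL: "\<forall>v\<in>K. f v = L v"
    and absorb: "\<And>w. \<exists>u\<in>K. w + u \<in> K"
  shows "surj L"
proof -
  have "inj L"
  proof (subst linear_injective_0[OF L], intro allI impI)
    fix x assume "L x = 0"
    obtain u where u: "u \<in> K" "x + u \<in> K" using absorb by blast
    have "f (x + u) = f u"
      using fL u linear_add[OF L] \<open>L x = 0\<close> by simp
    then show "x = 0" using \<open>inj f\<close> by (simp add: inj_eq)
  qed
  then show ?thesis using linear_injective_imp_surjective L by blast
qed

lemma Fpts_add: "subring_Z F \<Longrightarrow> x \<in> Fpts F \<Longrightarrow> y \<in> Fpts F \<Longrightarrow> x + y \<in> Fpts F"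
  unfolding Fpts_def subring_Z_def by auto

lemma Fpts_sum:
  assumes "subring_Z F" and "finite V" and "V \<subseteq> Fpts F"
  shows "(\<Sum>V) \<in> Fpts F"
  using assms(2,3)
proof (induction V rule: finite_induct)
  case empty then show ?case using assms(1) unfolding Fpts_def subring_Z_def by auto
next
  case (insert x V) then show ?case by (simp add: Fpts_add assms(1))
qed

lemma Fpts_scaleR_of_nat:
  assumes "subring_Z F" and "x \<in> Fpts F"
  shows "real N *\<^sub>R x \<in> Fpts F"
proof -
  have "real N \<in> F" using assms(1) unfolding subring_Z_def by (metis Ints_of_nat subsetD)
  then show ?thesis using assms unfolding Fpts_def subring_Z_def by auto
qed

lemma pl_chart_class:
  assumes "b \<in> I"
  shows "pl_chart b (pl_class I \<mu> a v) = \<mu> a b v"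
  unfolding pl_chart_def pl_class_def using assms by auto

lemma pl_class_mutation:
  assumes "polyptych_lattice F I \<mu>" and "a \<in> I" and "b \<in> I"
  shows "pl_class I \<mu> b (\<mu> a b v) = pl_class I \<mu> a v"
  using assms unfolding polyptych_lattice_def pl_class_def by auto

lemma pl_mutation_inj:
  assumes "polyptych_lattice F I \<mu>" and "a \<in> I" and "b \<in> I"
  shows "inj (\<mu> a b)"
proof (rule inj_on_inverseI)
  fix v show "\<mu> b a (\<mu> a b v) = v"
    using assms unfolding polyptych_lattice_def by blast
qed

lemma pl_elem_eq_class_chart:
  assumes PL: "polyptych_lattice F I \<mu>" and "m \<in> pl_elems S I \<mu>" and b: "b \<in> I"
  shows "m = pl_class I \<mu> b (pl_chart b m)"
proof -
  obtain a v where m: "m = pl_class I \<mu> a v" "a \<in> I" using assms(2) unfolding pl_elems_def by auto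
  then show ?thesis using pl_chart_class[OF b, of \<mu> a v] pl_class_mutation[OF PL m(2) b] by simp
qed

lemma pl_class_mem_if_chart_mem:
  assumes "polyptych_lattice F I \<mu>" and "C \<subseteq> pl_elems UNIV I \<mu>" and "a \<in> I"
    and "x \<in> pl_chart a ` C"
  shows "pl_class I \<mu> a x \<in> C"
proof -
  obtain y where y: "y \<in> C" "x = pl_chart a y" using assms(4) by blast
  then have "y = pl_class I \<mu> a x"
    using pl_elem_eq_class_chart[OF assms(1) _ assms(3)] assms(2) by blast
  then show ?thesis using y(1) by simp
qed

lemma pl_chart_in_Fpts:
  assumes "m \<in> pl_elems S I \<mu>" and "b \<in> I"
    and "\<forall>a\<in>I. \<forall>b\<in>I. \<mu> a b ` Fpts S \<subseteq> Fpts S"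
  shows "pl_chart b m \<in> Fpts S"
proof -
  obtain a v where "m = pl_class I \<mu> a v" "a \<in> I" "v \<in> Fpts S"
    using assms(1) unfolding pl_elems_def by blast
  moreover from this have "pl_chart b m = \<mu> a b v" using pl_chart_class[OF assms(2)] by simp
  ultimately show ?thesis using assms(2,3) by blast
qed

lemma pl_add_in_elems:
  fixes \<mu> :: "'i \<Rightarrow> 'i \<Rightarrow> real^'n \<Rightarrow> real^'n"
  assumes "m \<in> pl_elems S I \<mu>" and "m' \<in> pl_elems S I \<mu>" and "b \<in> I"
    and "\<forall>x\<in>(Fpts S :: (real^'n) set). \<forall>y\<in>Fpts S. x + y \<in> Fpts S"
    and "\<forall>a\<in>I. \<forall>b\<in>I. \<mu> a b ` Fpts S \<subseteq> Fpts S"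
  shows "pl_add I \<mu> b m m' \<in> pl_elems S I \<mu>"
proof -
  have "pl_chart b m + pl_chart b m' \<in> Fpts S"
    using assms(4) pl_chart_in_Fpts[OF assms(1,3,5)] pl_chart_in_Fpts[OF assms(2,3,5)] by blast
  then show ?thesis unfolding pl_add_def pl_elems_def using assms(3) by blast
qed

lemma pl_add_class_eq:
  assumes PL: "polyptych_lattice F I \<mu>" and a: "a \<in> I" and b: "b \<in> I"
    and L: "linear L" and \<mu>L: "\<forall>v\<in>K. \<mu> a b v = L v"
    and w: "L w = pl_chart b m" and "v \<in> K" and "w + v \<in> K"
  shows "pl_add I \<mu> b m (pl_class I \<mu> a v) = pl_class I \<mu> a (w + v)"
proof -
  have "pl_chart b m + pl_chart b (pl_class I \<mu> a v) = L (w + v)"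
    using pl_chart_class[OF b, of \<mu> a v] \<mu>L \<open>v \<in> K\<close> w linear_add[OF L] by simp
  also have "\<dots> = \<mu> a b (w + v)" using \<mu>L \<open>w + v \<in> K\<close> by simp
  finally show ?thesis
    unfolding pl_add_def using pl_class_mutation[OF PL a b] by simp
qed

lemma pl_point_eq_if_eq_on_shifts:
  assumes p: "pl_point S I \<mu> p" and q: "pl_point S I \<mu> q"
    and m: "m \<in> pl_elems S I \<mu>" and u: "u \<in> pl_elems S I \<mu>" and "p u = q u"
    and shifts: "\<forall>b\<in>I. p (pl_add I \<mu> b m u) = q (pl_add I \<mu> b m u)"
  shows "p m = q m"
proof -
  have "p m + p u = Min ((\<lambda>b. p (pl_add I \<mu> b m u)) ` I)"
    using p m u unfolding pl_point_def by blast
  also have "\<dots> = Min ((\<lambda>b. q (pl_add I \<mu> b m u)) ` I)"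
    using shifts by (intro arg_cong[where f=Min] image_cong) auto
  also have "\<dots> = q m + q u"
    using q m u unfolding pl_point_def by (blast intro: sym)
  finally show ?thesis using \<open>p u = q u\<close> by simp
qed

lemma pl_Sigma_cone_chart:
  assumes "pl_Sigma F I \<mu> \<Sigma>" and "C \<in> \<Sigma>" and "a \<in> I"
  obtains V L where "finite V" "V \<subseteq> Fpts F" "pl_chart a ` C = gen_cone V"
    and "C \<subseteq> pl_elems UNIV I \<mu>"
    and "\<And>b. b \<in> I \<Longrightarrow> linear (L b)"
    and "\<And>b. b \<in> I \<Longrightarrow> \<forall>v\<in>pl_chart a ` C. \<mu> a b v = L b v"
proof -
  have fan: "pl_linear_fan F I \<mu> \<Sigma>" using assms(1) unfolding pl_Sigma_def by simp
  then have cone: "pl_cone F I \<mu> C" using assms(2) unfolding pl_linear_fan_def by simp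
  have linear_on_C: "\<forall>b\<in>I. \<exists>L. linear L \<and> (\<forall>v\<in>pl_chart a ` C. \<mu> a b v = L v)"
    using fan assms(2,3) unfolding pl_linear_fan_def by blast
  obtain L where "\<And>b. b \<in> I \<Longrightarrow> linear (L b)"
      and "\<And>b. b \<in> I \<Longrightarrow> \<forall>v\<in>pl_chart a ` C. \<mu> a b v = L b v"
    using bchoice[OF linear_on_C] by blast
  moreover obtain V where "finite V" "V \<subseteq> Fpts F" "pl_chart a ` C = gen_cone V"
    using cone assms(3) unfolding pl_cone_def F_cone_def by blast
  moreover have "C \<subseteq> pl_elems UNIV I \<mu>" using cone unfolding pl_cone_def by simp
  ultimately show ?thesis using that by blast
qed

lemma pl_full_cone_common_shift:
  fixes \<mu> :: "'i \<Rightarrow> 'i \<Rightarrow> real^'n \<Rightarrow> real^'n"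
  assumes PL: "polyptych_lattice F I \<mu>" and fin: "finite I" and Sig: "pl_Sigma F I \<mu> \<Sigma>"
    and "C \<in> \<Sigma>" and a: "a \<in> I" and full: "aff_dim (pl_chart a ` C) = int CARD('n)"
    and FS: "Fpts F \<subseteq> (Fpts S :: (real^'n) set)"
  shows "\<exists>u\<in>C \<inter> pl_elems S I \<mu>. \<forall>b\<in>I. pl_add I \<mu> b m u \<in> C"
proof -
  define K where "K = pl_chart a ` C"
  have sF: "subring_Z F" using PL unfolding polyptych_lattice_def by simp
  obtain V L where V: "finite V" "V \<subseteq> Fpts F" "K = gen_cone V"
      and C_elems: "C \<subseteq> pl_elems UNIV I \<mu>"
      and L: "\<And>b. b \<in> I \<Longrightarrow> linear (L b)"
      and \<mu>L: "\<And>b. b \<in> I \<Longrightarrow> \<forall>v\<in>K. \<mu> a b v = L b v"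
    using pl_Sigma_cone_chart[OF Sig \<open>C \<in> \<Sigma>\<close> a] unfolding K_def by blast
  have spanV: "span V = UNIV"
    using span_eq_UNIV_if_full_aff_dim_gen_cone full V(3) K_def by metis
  have surjL: "surj (L b)" if b: "b \<in> I" for b
  proof (rule linear_surj_if_agrees_with_inj[OF L[OF b] _ \<mu>L[OF b]])
    show "inj (\<mu> a b)" using pl_mutation_inj[OF PL a b] .
    fix w
    obtain N :: nat where "\<forall>x\<in>{0, w}. x + real N *\<^sub>R (\<Sum>V) \<in> K"
      using gen_cone_absorbs_finite[OF V(1) spanV, of "{0, w}"] V(3) by auto
    then show "\<exists>u\<in>K. w + u \<in> K" by auto
  qed
  define w where "w b = inv (L b) (pl_chart b m)" for b
  have w: "L b (w b) = pl_chart b m" if "b \<in> I" for b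
    unfolding w_def using surj_f_inv_f[OF surjL[OF that]] .
  obtain N :: nat where N: "\<forall>x\<in>insert 0 (w ` I). x + real N *\<^sub>R (\<Sum>V) \<in> K"
    using gen_cone_absorbs_finite[OF V(1) spanV, of "insert 0 (w ` I)"] fin V(3) by auto
  define v where "v = real N *\<^sub>R (\<Sum>V)"
  have "v \<in> K" using N v_def by simp
  have "v \<in> Fpts S" using Fpts_scaleR_of_nat[OF sF Fpts_sum[OF sF V(1,2)]] FS v_def by blast
  have K_class: "pl_class I \<mu> a x \<in> C" if "x \<in> K" for x
    using pl_class_mem_if_chart_mem[OF PL C_elems a] that unfolding K_def .
  have "pl_class I \<mu> a v \<in> pl_elems S I \<mu>"
    using a \<open>v \<in> Fpts S\<close> unfolding pl_elems_def by blast
  moreover have "pl_add I \<mu> b m (pl_class I \<mu> a v) \<in> C" if b: "b \<in> I" for b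
  proof -
    have "w b + v \<in> K" using N b v_def by simp
    then have "pl_add I \<mu> b m (pl_class I \<mu> a v) = pl_class I \<mu> a (w b + v)"
      using pl_add_class_eq[OF PL a b L[OF b] \<mu>L[OF b] w[OF b] \<open>v \<in> K\<close>] by simp
    then show ?thesis using K_class[OF \<open>w b + v \<in> K\<close>] by simp
  qed
  ultimately show ?thesis using K_class[OF \<open>v \<in> K\<close>] by blast
qed

lemma pl_points_eq_if_eq_on_full_cone:
  fixes \<mu> :: "'i \<Rightarrow> 'i \<Rightarrow> real^'n \<Rightarrow> real^'n"
  assumes PL: "polyptych_lattice F I \<mu>" and fin: "finite I" and Sig: "pl_Sigma F I \<mu> \<Sigma>"
    and "C \<in> \<Sigma>" and a: "a \<in> I" and full: "aff_dim (pl_chart a ` C) = int CARD('n)"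
    and FS: "Fpts F \<subseteq> (Fpts S :: (real^'n) set)"
    and addS: "\<forall>x\<in>(Fpts S :: (real^'n) set). \<forall>y\<in>Fpts S. x + y \<in> Fpts S"
    and mS: "\<forall>a\<in>I. \<forall>b\<in>I. \<mu> a b ` Fpts S \<subseteq> Fpts S"
    and p: "pl_point S I \<mu> p" and q: "pl_point S I \<mu> q"
    and agree: "\<forall>m\<in>C \<inter> pl_elems S I \<mu>. p m = q m"
    and m: "m \<in> pl_elems S I \<mu>"
  shows "p m = q m"
proof -
  obtain u where u: "u \<in> C \<inter> pl_elems S I \<mu>" and shifts: "\<forall>b\<in>I. pl_add I \<mu> b m u \<in> C"
    using pl_full_cone_common_shift[OF assms(1-7)] by blast
  have "\<forall>b\<in>I. pl_add I \<mu> b m u \<in> pl_elems S I \<mu>"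
    using pl_add_in_elems[OF m _ _ addS mS] u by blast
  then show ?thesis
    using pl_point_eq_if_eq_on_shifts[OF p q m] u shifts agree by blast
qed

theorem mainTheorem2:
  fixes F :: "real set" and I :: "'i set" and \<mu> :: "'i \<Rightarrow> 'i \<Rightarrow> real^'n \<Rightarrow> real^'n"
    and \<Sigma> :: "('i \<times> (real^'n)) set set set" and C :: "('i \<times> (real^'n)) set set"
  assumes "polyptych_lattice F I \<mu>"
    and "finite I"
    and "pl_Sigma F I \<mu> \<Sigma>"
    and "C \<in> \<Sigma>"
    and "\<exists>a\<in>I. aff_dim (pl_chart a ` C) = int CARD('n)"
  shows "(\<forall>p q. pl_point F I \<mu> p \<and> pl_point F I \<mu> q
            \<and> (\<forall>m\<in>C \<inter> pl_elems F I \<mu>. p m = q m)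
            \<longrightarrow> (\<forall>m\<in>pl_elems F I \<mu>. p m = q m))
       \<and> (\<forall>p q. pl_point UNIV I \<mu> p \<and> pl_point UNIV I \<mu> q
            \<and> (\<forall>m\<in>C. p m = q m)
            \<longrightarrow> (\<forall>m\<in>pl_elems UNIV I \<mu>. p m = q m))"
proof -
  obtain a where a: "a \<in> I" "aff_dim (pl_chart a ` C) = int CARD('n)" using assms(5) by blast
  have sF: "subring_Z F" and mF: "\<forall>a\<in>I. \<forall>b\<in>I. \<mu> a b ` Fpts F \<subseteq> Fpts F"
    using assms(1) unfolding polyptych_lattice_def by blast+
  have UNIV_Fpts: "Fpts (UNIV::real set) = (UNIV :: (real^'n) set)" unfolding Fpts_def by simp
  have C_elems: "C \<subseteq> pl_elems UNIV I \<mu>"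
    using assms(3,4) unfolding pl_Sigma_def pl_linear_fan_def pl_cone_def by blast
  show ?thesis
  proof (intro conjI allI impI ballI)
    fix p q m
    assume "pl_point F I \<mu> p \<and> pl_point F I \<mu> q \<and> (\<forall>m\<in>C \<inter> pl_elems F I \<mu>. p m = q m)"
      and "m \<in> pl_elems F I \<mu>"
    then show "p m = q m"
      using pl_points_eq_if_eq_on_full_cone[OF assms(1-4) a order_refl _ mF] Fpts_add[OF sF]
      by blast
  next
    fix p q m
    assume "pl_point UNIV I \<mu> p \<and> pl_point UNIV I \<mu> q \<and> (\<forall>m\<in>C. p m = q m)"
      and "m \<in> pl_elems UNIV I \<mu>"
    then show "p m = q m"
      using pl_points_eq_if_eq_on_full_cone[OF assms(1-4) a, where S=UNIV] UNIV_Fpts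
      by (simp add: Int_absorb2[OF C_elems])
  qed
qed

end
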